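(* Let $\pi$ be the degree sequence of some tree with boundary, and let $\mathcal{T}_\pi$ be the class of all trees with boundary with degree sequence $\pi$. Then $\mathcal{T}_\pi$ contains an SLO$^\ast$-tree, and any two SLO$^\ast$-trees in $\mathcal{T}_\pi$ are isomorphic.
   Context: A tree with boundary is a finite tree $G=(V,E)$ whose vertex set is partitioned into the set $\partial V$ of boundary vertices, which are exactly the vertices of degree $1$, and the set $V_0$ of interior vertices, which are exactly the vertices of degree at least $2$; both sets are nonempty. Its degree sequence is the multiset of vertex degrees. For a tree with a chosen root $v_0$, the height of $v$ is $h(v)=\mathrm{dist}(v,v_0)$; if $v,w$ are adjacent and $h(w)=h(v)+1$, then $v$ is the parent of $w$ and $w$ a child of $v$. A total order $\prec$ on $V$ is spiral-like (SLO) for root $v_0$ if: (S1) $v\prec w$ implies $h(v)\le h(w)$; (S2) if $v_1\prec v_2$ then every child of $v_1$ precedes every child of $v_2$; (S3) if $v\prec w$ and $v\in\partial V$ then $w\in\partial V$. It is an SLO$^\ast$-ordering if additionally (S4) for interior vertices $v\prec w$ implies $d_v\le d_w$ ($d_v$ the degree). An SLO$^\ast$-tree is a tree with boundary admitting an SLO$^\ast$-ordering for some root. *)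

theory Defs
  imports Main "HOL-Library.Multiset"
begin

definition graph :: "'a set \<Rightarrow> 'a set set \<Rightarrow> bool" where
  "graph V E \<longleftrightarrow> finite V \<and> (\<forall>e\<in>E. e \<subseteq> V \<and> card e = 2)"

definition adj :: "'a set set \<Rightarrow> 'a \<Rightarrow> 'a \<Rightarrow> bool" where
  "adj E x y \<longleftrightarrow> {x, y} \<in> E"

definition deg :: "'a set set \<Rightarrow> 'a \<Rightarrow> nat" where
  "deg E v = card {e \<in> E. v \<in> e}"

definition connected_graph :: "'a set \<Rightarrow> 'a set set \<Rightarrow> bool" where
  "connected_graph V E \<longleftrightarrow> V \<noteq> {} \<and> (\<forall>x\<in>V. \<forall>y\<in>V. (adj E)\<^sup>*\<^sup>* x y)"

definition tree :: "'a set \<Rightarrow> 'a set set \<Rightarrow> bool" where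
  "tree V E \<longleftrightarrow> graph V E \<and> connected_graph V E \<and> card E + 1 = card V"

definition boundary :: "'a set \<Rightarrow> 'a set set \<Rightarrow> 'a set" where
  "boundary V E = {v \<in> V. deg E v = 1}"

definition interior :: "'a set \<Rightarrow> 'a set set \<Rightarrow> 'a set" where
  "interior V E = {v \<in> V. deg E v \<ge> 2}"

definition tree_with_boundary :: "'a set \<Rightarrow> 'a set set \<Rightarrow> bool" where
  "tree_with_boundary V E \<longleftrightarrow> tree V E \<and> V = boundary V E \<union> interior V E
     \<and> boundary V E \<noteq> {} \<and> interior V E \<noteq> {}"

definition degree_sequence :: "'a set \<Rightarrow> 'a set set \<Rightarrow> nat multiset" where
  "degree_sequence V E = image_mset (deg E) (mset_set V)"

definition dist :: "'a set set \<Rightarrow> 'a \<Rightarrow> 'a \<Rightarrow> nat" where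
  "dist E x y = (LEAST n. (adj E ^^ n) x y)"

definition height :: "'a set set \<Rightarrow> 'a \<Rightarrow> 'a \<Rightarrow> nat" where
  "height E v0 v = dist E v0 v"

definition child :: "'a set set \<Rightarrow> 'a \<Rightarrow> 'a \<Rightarrow> 'a \<Rightarrow> bool" where
  "child E v0 v w \<longleftrightarrow> adj E v w \<and> height E v0 w = height E v0 v + 1"

definition strict_total_order_on :: "'a set \<Rightarrow> ('a \<Rightarrow> 'a \<Rightarrow> bool) \<Rightarrow> bool" where
  "strict_total_order_on V prec \<longleftrightarrow>
     (\<forall>x\<in>V. \<not> prec x x) \<and>
     (\<forall>x\<in>V. \<forall>y\<in>V. \<forall>z\<in>V. prec x y \<longrightarrow> prec y z \<longrightarrow> prec x z) \<and>
     (\<forall>x\<in>V. \<forall>y\<in>V. x \<noteq> y \<longrightarrow> prec x y \<or> prec y x)"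

definition SLO :: "'a set \<Rightarrow> 'a set set \<Rightarrow> 'a \<Rightarrow> ('a \<Rightarrow> 'a \<Rightarrow> bool) \<Rightarrow> bool" where
  "SLO V E v0 prec \<longleftrightarrow> v0 \<in> V \<and> strict_total_order_on V prec \<and>
     (\<forall>v\<in>V. \<forall>w\<in>V. prec v w \<longrightarrow> height E v0 v \<le> height E v0 w) \<and>
     (\<forall>v1\<in>V. \<forall>v2\<in>V. prec v1 v2 \<longrightarrow>
        (\<forall>w1\<in>V. \<forall>w2\<in>V. child E v0 v1 w1 \<longrightarrow> child E v0 v2 w2 \<longrightarrow> prec w1 w2)) \<and>
     (\<forall>v\<in>V. \<forall>w\<in>V. prec v w \<longrightarrow> v \<in> boundary V E \<longrightarrow> w \<in> boundary V E)"

definition SLO_star :: "'a set \<Rightarrow> 'a set set \<Rightarrow> 'a \<Rightarrow> ('a \<Rightarrow> 'a \<Rightarrow> bool) \<Rightarrow> bool" where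
  "SLO_star V E v0 prec \<longleftrightarrow> SLO V E v0 prec \<and>
     (\<forall>v\<in>interior V E. \<forall>w\<in>interior V E. prec v w \<longrightarrow> deg E v \<le> deg E w)"

definition SLO_star_tree :: "'a set \<Rightarrow> 'a set set \<Rightarrow> bool" where
  "SLO_star_tree V E \<longleftrightarrow> tree_with_boundary V E \<and> (\<exists>v0 prec. SLO_star V E v0 prec)"

definition graph_iso :: "'a set \<Rightarrow> 'a set set \<Rightarrow> 'b set \<Rightarrow> 'b set set \<Rightarrow> bool" where
  "graph_iso V1 E1 V2 E2 \<longleftrightarrow> (\<exists>f. bij_betw f V1 V2 \<and>
     (\<forall>x\<in>V1. \<forall>y\<in>V1. {x, y} \<in> E1 \<longleftrightarrow> {f x, f y} \<in> E2))"

end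

theory Submission
  imports Defs "HOL-Library.Product_Lexorder"
begin

text \<open>
  List the degree sequence \<open>\<pi>\<close> as \<open>d\<^sub>0, \<dots>, d\<^sub>n\<^sub>-\<^sub>1\<close>: the interior degrees in increasing
  order, then the leaves. In an SLO\<open>\<^sup>*\<close>-tree, numbering the vertices along the ordering
  gives vertex \<open>i\<close> degree \<open>d\<^sub>i\<close> by (S3) and (S4), the root is vertex \<open>0\<close> by (S1), so
  vertex \<open>i\<close> has \<open>c\<^sub>0 = d\<^sub>0\<close> resp. \<open>c\<^sub>i = d\<^sub>i - 1\<close> children. By (S2) the parent index is a
  monotone function of the child index whose fibres have sizes \<open>c\<^sub>i\<close>; hence the parent of
  vertex \<open>m \<ge> 1\<close> is the least \<open>i\<close> with \<open>m \<le> c\<^sub>0 + \<dots> + c\<^sub>i\<close>. So every SLO\<open>\<^sup>*\<close>-tree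
  with degree sequence \<open>\<pi>\<close> is isomorphic to this ``spiral'' tree, and conversely the spiral
  tree on any vertex set of size \<open>n\<close>, ordered by index, is an SLO\<open>\<^sup>*\<close>-tree with degree
  sequence \<open>\<pi>\<close>.
\<close>

section \<open>Rooted trees\<close>

lemma adj_commute: "adj E x y = adj E y x"
  by (simp add: adj_def insert_commute)

lemma symp_adj: "symp (adj E)"
  by (rule sympI) (simp add: adj_commute)

lemma graph_adj_in: "graph V E \<Longrightarrow> adj E x y \<Longrightarrow> x \<in> V \<and> y \<in> V \<and> x \<noteq> y"
  unfolding graph_def adj_def by (cases "x = y") auto

lemma graph_finite_edges: "graph V E \<Longrightarrow> finite E"
  unfolding graph_def by (meson Pow_iff finite_Pow_iff finite_subset subsetI)

lemma sum_deg_eq_twice_card_edges: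
  assumes g: "graph V E"
  shows "(\<Sum>v\<in>V. deg E v) = 2 * card E"
proof -
  have fin: "finite V" using g unfolding graph_def by blast
  have finE: "finite E" using g by (rule graph_finite_edges)
  have "deg E v = (\<Sum>e\<in>E. if v \<in> e then 1 else 0)" for v
    unfolding deg_def using sum.inter_filter[OF finE, of "\<lambda>_. 1::nat"] by simp
  then have "(\<Sum>v\<in>V. deg E v) = (\<Sum>v\<in>V. \<Sum>e\<in>E. if v \<in> e then 1 else 0)"
    by simp
  also have "\<dots> = (\<Sum>e\<in>E. \<Sum>v\<in>V. if v \<in> e then 1 else 0)"
    by (rule sum.swap)
  also have "\<dots> = (\<Sum>e\<in>E. 2)"
  proof (rule sum.cong)
    fix e assume "e \<in> E"
    then have e: "e \<subseteq> V" "card e = 2" using g unfolding graph_def by blast+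
    then have "{v\<in>V. v \<in> e} = e" by blast
    then show "(\<Sum>v\<in>V. if v \<in> e then 1 else 0) = (2::nat)"
      using e by (simp add: sum.inter_filter[OF fin, symmetric])
  qed simp
  finally show ?thesis by simp
qed

lemma walk_potential_le:
  assumes step: "\<And>x y. adj E x y \<Longrightarrow> g y \<le> g x + 1"
  shows "(adj E ^^ k) a b \<Longrightarrow> g b \<le> g a + k"
proof (induction k arbitrary: b)
  case 0
  then show ?case by simp
next
  case (Suc k)
  from Suc.prems obtain c where "(adj E ^^ k) a c" "adj E c b" by (rule relpowp_Suc_E)
  with Suc.IH step[of c b] show ?case by fastforce
qed

lemma height_eqI:
  assumes g: "graph V E" and root: "root \<in> V" "f root = 0"
    and step: "\<And>x y. adj E x y \<Longrightarrow> f y \<le> f x + 1"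
    and tight: "\<And>v. v \<in> V \<Longrightarrow> v \<noteq> root \<Longrightarrow> \<exists>u. adj E u v \<and> f v = f u + 1"
    and v: "v \<in> V"
  shows "height E root v = f v"
proof -
  have walk: "\<forall>v\<in>V. f v = k \<longrightarrow> (adj E ^^ k) root v" for k
  proof (induction k)
    case 0
    then show ?case using tight by fastforce
  next
    case (Suc k)
    show ?case
    proof (intro ballI impI)
      fix v assume v: "v \<in> V" "f v = Suc k"
      then obtain u where u: "adj E u v" "f v = f u + 1" using tight root by fastforce
      then have "u \<in> V" using graph_adj_in[OF g] by blast
      with Suc.IH u v have "(adj E ^^ k) root u" by auto
      then show "(adj E ^^ Suc k) root v" using u(1) by (rule relpowp_Suc_I)
    qed
  qed
  show ?thesis unfolding height_def dist_def
  proof (rule Least_equality)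
    show "(adj E ^^ f v) root v" using walk v by blast
    fix n assume "(adj E ^^ n) root v"
    then show "f v \<le> n" using walk_potential_le[of E f n root v] step root by fastforce
  qed
qed

locale rooted_tree =
  fixes V :: "'a set" and E :: "'a set set" and root :: 'a
  assumes tree: "tree V E" and root_in_V: "root \<in> V"
begin

abbreviation ht :: "'a \<Rightarrow> nat" where
  "ht \<equiv> height E root"

lemma graph: "graph V E"
  using tree unfolding tree_def by blast

lemma finite_vertices: "finite V"
  using graph unfolding graph_def by blast

lemma walk_to_height: "v \<in> V \<Longrightarrow> (adj E ^^ ht v) root v"
proof -
  assume "v \<in> V"
  with tree root_in_V have "(adj E)\<^sup>*\<^sup>* root v"
    unfolding tree_def connected_graph_def by blast
  then obtain n where "(adj E ^^ n) root v" using rtranclp_power by metis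
  then show ?thesis unfolding height_def dist_def by (rule LeastI)
qed

lemma height_le_walk: "(adj E ^^ n) root v \<Longrightarrow> ht v \<le> n"
  unfolding height_def dist_def by (rule Least_le)

lemma height_adj_le: "adj E x y \<Longrightarrow> ht y \<le> ht x + 1"
proof -
  assume xy: "adj E x y"
  then have "x \<in> V" using graph_adj_in[OF graph] by blast
  from relpowp_Suc_I[OF walk_to_height[OF this] xy] show ?thesis
    using height_le_walk by fastforce
qed

lemma height_eq_0_iff: "v \<in> V \<Longrightarrow> ht v = 0 \<longleftrightarrow> v = root"
  using walk_to_height[of v] height_le_walk[of 0 root] by auto

lemma child_height: "child E root x y \<Longrightarrow> ht y = ht x + 1"
  unfolding child_def by simp

lemma child_in_V: "child E root x y \<Longrightarrow> x \<in> V \<and> y \<in> V \<and> y \<noteq> root"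
  unfolding child_def using graph_adj_in[OF graph] height_eq_0_iff by force

lemma ex_parent: "v \<in> V \<Longrightarrow> v \<noteq> root \<Longrightarrow> \<exists>u. child E root u v"
proof -
  assume v: "v \<in> V" "v \<noteq> root"
  then obtain k where k: "ht v = Suc k" using height_eq_0_iff not0_implies_Suc by blast
  with walk_to_height[OF v(1)] obtain u where u: "(adj E ^^ k) root u" "adj E u v"
    by (metis relpowp_Suc_E)
  have "ht v = ht u + 1" using height_le_walk[OF u(1)] height_adj_le[OF u(2)] k by simp
  then show ?thesis using u(2) unfolding child_def by blast
qed

definition parent :: "'a \<Rightarrow> 'a" where
  "parent w = (SOME u. child E root u w)"

lemma child_parent: "w \<in> V \<Longrightarrow> w \<noteq> root \<Longrightarrow> child E root (parent w) w"
  unfolding parent_def using ex_parent by (metis someI_ex)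

lemma child_pair_eq:
  "child E root x y \<Longrightarrow> child E root a b \<Longrightarrow> {x, y} = {a, b} \<Longrightarrow> x = a \<and> y = b"
  using child_height[of x y] child_height[of a b] by (auto simp: doubleton_eq_iff)

lemma inj_on_parent_edge: "inj_on (\<lambda>w. {parent w, w}) (V - {root})"
  by (rule inj_onI) (use child_pair_eq child_parent in blast)

text \<open>The parent edges are distinct and there are \<open>card V - 1 = card E\<close> of them.\<close>

lemma edges_eq_parent_edges: "E = (\<lambda>w. {parent w, w}) ` (V - {root})"
proof -
  have sub: "(\<lambda>w. {parent w, w}) ` (V - {root}) \<subseteq> E"
    using child_parent unfolding child_def adj_def by blast
  have "card E + 1 = card V" using tree unfolding tree_def by blast
  then have "card ((\<lambda>w. {parent w, w}) ` (V - {root})) = card E"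
    using card_image[OF inj_on_parent_edge] root_in_V finite_vertices by simp
  then show ?thesis using card_subset_eq[OF graph_finite_edges[OF graph] sub] by simp
qed

lemma child_imp_parent: "child E root x y \<Longrightarrow> y \<noteq> root \<and> x = parent y"
proof -
  assume c: "child E root x y"
  then have "{x, y} \<in> E" unfolding child_def adj_def by blast
  then obtain a where a: "a \<in> V - {root}" "{x, y} = {parent a, a}"
    using edges_eq_parent_edges by blast
  from child_pair_eq[OF c child_parent a(2)] a(1) show ?thesis by auto
qed

lemma edge_iff_child: "{x, y} \<in> E \<longleftrightarrow> child E root x y \<or> child E root y x"
proof
  assume "{x, y} \<in> E"
  then obtain a where a: "a \<in> V - {root}" "{x, y} = {parent a, a}"
    using edges_eq_parent_edges by blast
  then have "(x = parent a \<and> y = a) \<or> (x = a \<and> y = parent a)"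
    by (simp add: doubleton_eq_iff)
  then show "child E root x y \<or> child E root y x" using child_parent[of a] a(1) by blast
next
  assume "child E root x y \<or> child E root y x"
  then show "{x, y} \<in> E" unfolding child_def adj_def by (metis insert_commute)
qed

lemma deg_eq_card_children:
  assumes v: "v \<in> V"
  shows "deg E v = card {w \<in> V - {root}. parent w = v} + (if v = root then 0 else 1)"
proof -
  let ?S = "{w \<in> V - {root}. parent w = v \<or> w = v}"
  have "{e \<in> E. v \<in> e} = (\<lambda>w. {parent w, w}) ` ?S"
    by (subst edges_eq_parent_edges) auto
  moreover have "inj_on (\<lambda>w. {parent w, w}) ?S"
    by (rule inj_on_subset[OF inj_on_parent_edge]) blast
  ultimately have "deg E v = card ?S"
    unfolding deg_def by (simp add: card_image)
  also have "?S = {w \<in> V - {root}. parent w = v} \<union> (if v = root then {} else {v})"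
    using v by auto
  also have "card \<dots> = card {w \<in> V - {root}. parent w = v} + (if v = root then 0 else 1)"
  proof -
    have "v \<noteq> root \<Longrightarrow> parent v \<noteq> v" using child_parent[of v] child_height v by fastforce
    then show ?thesis using finite_vertices by (auto simp: card_insert_if)
  qed
  finally show ?thesis .
qed

end

section \<open>The spiral tree of a degree sequence\<close>

text \<open>Interior degrees first, in increasing order, then the leaves: by (S3) and (S4) this is
  the order in which an SLO\<open>\<^sup>*\<close>-ordering lists the degrees.\<close>

definition degree_key :: "nat \<Rightarrow> bool \<times> nat" where
  "degree_key d = (d < 2, d)"

definition spiral_degrees :: "nat multiset \<Rightarrow> nat list" where
  "spiral_degrees \<pi> = sort_key degree_key (sorted_list_of_multiset \<pi>)"

lemma mset_spiral_degrees [simp]: "mset (spiral_degrees \<pi>) = \<pi>"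
  unfolding spiral_degrees_def by simp

lemma sorted_spiral_degrees: "sorted (map degree_key (spiral_degrees \<pi>))"
  unfolding spiral_degrees_def by simp

lemma spiral_degrees_eqI: "mset ds = \<pi> \<Longrightarrow> sorted (map degree_key ds) \<Longrightarrow> spiral_degrees \<pi> = ds"
  unfolding spiral_degrees_def
  by (rule sort_key_inj_key_eq) (auto simp: inj_on_def degree_key_def)

text \<open>In the spiral tree on \<open>{0..<length s}\<close> vertex \<open>i\<close> has degree \<open>s ! i\<close>, hence
  \<open>child_count s i\<close> children, and the children of \<open>i\<close> are the vertices
  \<open>children_before s i + 1, \<dots>, children_before s (Suc i)\<close>.\<close>

definition child_count :: "nat list \<Rightarrow> nat \<Rightarrow> nat" where
  "child_count s i = (if i < length s then (if i = 0 then s ! 0 else s ! i - 1) else 0)"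

definition children_before :: "nat list \<Rightarrow> nat \<Rightarrow> nat" where
  "children_before s i = (\<Sum>j<i. child_count s j)"

definition spiral_parent :: "nat list \<Rightarrow> nat \<Rightarrow> nat" where
  "spiral_parent s m = (LEAST i. m \<le> children_before s (Suc i))"

definition spiral_adj :: "nat list \<Rightarrow> nat \<Rightarrow> nat \<Rightarrow> bool" where
  "spiral_adj s i k \<longleftrightarrow> (1 \<le> i \<and> k = spiral_parent s i) \<or> (1 \<le> k \<and> i = spiral_parent s k)"

lemma children_before_Suc: "children_before s (Suc i) = children_before s i + child_count s i"
  unfolding children_before_def by simp

lemma children_before_mono: "i \<le> j \<Longrightarrow> children_before s i \<le> children_before s j"
  unfolding children_before_def by (rule sum_mono2) auto

lemma monotone_fibers_eq_spiral_parent: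
  assumes mono: "\<And>m m'. 1 \<le> m \<Longrightarrow> m \<le> m' \<Longrightarrow> m' < n \<Longrightarrow> p m \<le> p m'"
    and fibers: "\<And>i. card {m \<in> {1..<n}. p m = i} = child_count s i"
    and m: "1 \<le> m" "m < n"
  shows "p m = spiral_parent s m"
proof -
  have card_le: "card {m \<in> {1..<n}. p m \<le> i} = children_before s (Suc i)" for i
  proof (induction i)
    case 0
    then show ?case using fibers[of 0] by (simp add: children_before_def)
  next
    case (Suc i)
    have "{m \<in> {1..<n}. p m \<le> Suc i} = {m \<in> {1..<n}. p m \<le> i} \<union> {m \<in> {1..<n}. p m = Suc i}"
      by auto
    then have "card {m \<in> {1..<n}. p m \<le> Suc i}
        = card {m \<in> {1..<n}. p m \<le> i} + card {m \<in> {1..<n}. p m = Suc i}"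
      by (simp add: card_Un_disjoint disjoint_iff)
    then show ?case using Suc fibers[of "Suc i"] children_before_Suc[of s "Suc i"] by simp
  qed
  have le_iff: "p m \<le> i \<longleftrightarrow> m \<le> children_before s (Suc i)" for i
  proof
    assume "p m \<le> i"
    then have "{1..m} \<subseteq> {m' \<in> {1..<n}. p m' \<le> i}" using mono m by fastforce
    then have "card {1..m} \<le> card {m' \<in> {1..<n}. p m' \<le> i}" by (intro card_mono) auto
    then show "m \<le> children_before s (Suc i)" using card_le by simp
  next
    assume le: "m \<le> children_before s (Suc i)"
    show "p m \<le> i"
    proof (rule ccontr)
      assume "\<not> p m \<le> i"
      then have "{m' \<in> {1..<n}. p m' \<le> i} \<subseteq> {1..<m}"
        using mono[OF m(1)] by (force simp: not_le)
      then have "card {m' \<in> {1..<n}. p m' \<le> i} \<le> card {1..<m}" by (intro card_mono) auto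
      then show False using card_le le m by simp
    qed
  qed
  show ?thesis
    unfolding spiral_parent_def by (rule Least_equality[symmetric]) (use le_iff in auto)
qed

text \<open>The guard \<open>p m < m\<close> only serves termination; spiral parents satisfy it.\<close>

function ancestor_depth :: "(nat \<Rightarrow> nat) \<Rightarrow> nat \<Rightarrow> nat" where
  "ancestor_depth p m = (if m = 0 then 0 else if p m < m then ancestor_depth p (p m) + 1 else 0)"
  by pat_completeness auto
termination by (relation "measure (\<lambda>(p, m). m)") auto

declare ancestor_depth.simps [simp del]

lemma ancestor_depth_0 [simp]: "ancestor_depth p 0 = 0"
  by (simp add: ancestor_depth.simps)

locale tree_degree_list =
  fixes s :: "nat list" and n :: nat
  assumes length_eq: "length s = n"
    and sorted: "sorted (map degree_key s)"
    and degree_pos: "\<And>i. i < n \<Longrightarrow> 1 \<le> s ! i"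
    and ex_leaf: "\<exists>i<n. s ! i = 1"
    and ex_interior: "\<exists>i<n. 2 \<le> s ! i"
    and sum_eq: "(\<Sum>i<n. s ! i) = 2 * (n - 1)"
begin

lemma degree_key_mono: "i \<le> k \<Longrightarrow> k < n \<Longrightarrow> degree_key (s ! i) \<le> degree_key (s ! k)"
  using sorted length_eq unfolding sorted_iff_nth_mono by auto

lemma length_pos: "1 \<le> n"
  using ex_leaf by auto

lemma root_degree: "2 \<le> s ! 0"
proof -
  obtain i where i: "i < n" "2 \<le> s ! i" using ex_interior by blast
  then have "degree_key (s ! 0) \<le> degree_key (s ! i)" using degree_key_mono by simp
  then show ?thesis using i by (auto simp: degree_key_def less_eq_prod_def)
qed

definition first_leaf :: nat where
  "first_leaf = (LEAST j. j < n \<and> s ! j = 1)"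

lemma first_leaf: "first_leaf < n" "s ! first_leaf = 1"
  using LeastI_ex[OF ex_leaf] unfolding first_leaf_def by auto

lemma first_leaf_pos: "1 \<le> first_leaf"
  using first_leaf root_degree by (cases "first_leaf = 0") auto

lemma interior_before_first_leaf: "l < first_leaf \<Longrightarrow> 2 \<le> s ! l"
proof -
  assume l: "l < first_leaf"
  then have "\<not> (l < n \<and> s ! l = 1)" unfolding first_leaf_def using not_less_Least by blast
  then show ?thesis using degree_pos[of l] l first_leaf by auto
qed

lemma leaf_from_first_leaf: "first_leaf \<le> l \<Longrightarrow> l < n \<Longrightarrow> s ! l = 1"
proof -
  assume l: "first_leaf \<le> l" "l < n"
  then have "degree_key (s ! first_leaf) \<le> degree_key (s ! l)" using degree_key_mono by simp
  then show ?thesis using first_leaf degree_pos[of l] l by (auto simp: degree_key_def less_eq_prod_def)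
qed

lemma child_count_leaf: "first_leaf \<le> l \<Longrightarrow> child_count s l = 0"
  using leaf_from_first_leaf length_eq first_leaf_pos unfolding child_count_def by auto

lemma children_before_plus: "k < n \<Longrightarrow> children_before s (Suc k) + k = (\<Sum>l<Suc k. s ! l)"
proof (induction k)
  case 0
  then show ?case using length_eq unfolding children_before_def child_count_def by simp
next
  case (Suc k)
  have "child_count s (Suc k) + 1 = s ! Suc k"
    using degree_pos[of "Suc k"] Suc.prems length_eq unfolding child_count_def by simp
  then show ?case using Suc children_before_Suc[of s "Suc k"] by simp
qed

lemma children_before_length: "children_before s n = n - 1"
proof -
  obtain k where k: "n = Suc k" using length_pos by (cases n) auto
  then show ?thesis using children_before_plus[of k] sum_eq by simp
qed

lemma children_before_from_first_leaf:
  assumes "first_leaf \<le> i"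
  shows "children_before s i = n - 1"
proof -
  have const: "first_leaf \<le> j \<Longrightarrow> children_before s j = children_before s first_leaf" for j
    by (induction j rule: nat_induct_at_least) (simp_all add: children_before_Suc child_count_leaf)
  show ?thesis using const[OF assms] const[of n] first_leaf(1) children_before_length by simp
qed

lemma children_before_interior: "l < first_leaf \<Longrightarrow> l + 2 \<le> children_before s (Suc l)"
proof (induction l)
  case 0
  then show ?case
    using root_degree length_pos unfolding children_before_def child_count_def length_eq by simp
next
  case (Suc l)
  have "1 \<le> child_count s (Suc l)"
    using interior_before_first_leaf[OF Suc.prems] Suc.prems first_leaf length_eq
    unfolding child_count_def by auto
  then show ?case using Suc children_before_Suc[of s "Suc l"] by simp
qed

lemma children_before_le: "children_before s i \<le> n - 1"
  using children_before_mono[of i "max i first_leaf" s]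
    children_before_from_first_leaf[of "max i first_leaf"] by simp

lemma spiral_parent_le_iff: "m < n \<Longrightarrow> spiral_parent s m \<le> i \<longleftrightarrow> m \<le> children_before s (Suc i)"
proof
  assume m: "m < n" and "spiral_parent s m \<le> i"
  moreover have "m \<le> children_before s (Suc (spiral_parent s m))"
    unfolding spiral_parent_def
    by (rule LeastI[of _ n]) (use m children_before_from_first_leaf[of "Suc n"] first_leaf in simp)
  ultimately show "m \<le> children_before s (Suc i)"
    using children_before_mono[of "Suc (spiral_parent s m)" "Suc i" s] by simp
next
  assume "m \<le> children_before s (Suc i)"
  then show "spiral_parent s m \<le> i" unfolding spiral_parent_def by (rule Least_le)
qed

lemma spiral_parent_less: "1 \<le> m \<Longrightarrow> m < n \<Longrightarrow> spiral_parent s m < m"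
proof -
  assume m: "1 \<le> m" "m < n"
  then obtain l where l: "m = Suc l" by (cases m) auto
  have "m \<le> children_before s m"
  proof (cases "l < first_leaf")
    case True
    then show ?thesis using children_before_interior l by fastforce
  next
    case False
    then show ?thesis using children_before_from_first_leaf[of m] l m by simp
  qed
  then show ?thesis using spiral_parent_le_iff[OF m(2), of l] l by simp
qed

lemma spiral_parent_mono: "m \<le> m' \<Longrightarrow> m' < n \<Longrightarrow> spiral_parent s m \<le> spiral_parent s m'"
  using spiral_parent_le_iff[of m "spiral_parent s m'"] spiral_parent_le_iff[of m' "spiral_parent s m'"]
  by simp

lemma spiral_parent_fiber:
  "{m \<in> {1..<n}. spiral_parent s m = i} = {children_before s i<..children_before s (Suc i)}"
proof (rule set_eqI, rule iffI)
  fix m assume "m \<in> {m \<in> {1..<n}. spiral_parent s m = i}"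
  then have m: "1 \<le> m" "m < n" "spiral_parent s m = i" by auto
  have "children_before s i < m"
  proof (cases i)
    case 0
    then show ?thesis using m unfolding children_before_def by simp
  next
    case (Suc i')
    then show ?thesis using spiral_parent_le_iff[OF m(2), of i'] m by simp
  qed
  then show "m \<in> {children_before s i<..children_before s (Suc i)}"
    using spiral_parent_le_iff[OF m(2), of i] m by simp
next
  fix m assume "m \<in> {children_before s i<..children_before s (Suc i)}"
  then have m: "children_before s i < m" "m \<le> children_before s (Suc i)" by auto
  have mn: "1 \<le> m" "m < n" using m children_before_le[of "Suc i"] length_pos by auto
  have "\<not> spiral_parent s m < i"
  proof
    assume "spiral_parent s m < i"
    then obtain i' where "i = Suc i'" "spiral_parent s m \<le> i'" by (cases i) auto
    then show False using spiral_parent_le_iff[OF mn(2), of i'] m by simp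
  qed
  then show "m \<in> {m \<in> {1..<n}. spiral_parent s m = i}"
    using spiral_parent_le_iff[OF mn(2), of i] m mn by simp
qed

lemma card_spiral_parent_fiber: "card {m \<in> {1..<n}. spiral_parent s m = i} = child_count s i"
  unfolding spiral_parent_fiber using children_before_Suc[of s i] by simp

lemma ancestor_depth_Suc:
  "1 \<le> m \<Longrightarrow> m < n \<Longrightarrow> ancestor_depth (spiral_parent s) m = ancestor_depth (spiral_parent s) (spiral_parent s m) + 1"
  using spiral_parent_less by (subst ancestor_depth.simps) simp

lemma ancestor_depth_mono:
  "m \<le> m' \<Longrightarrow> m' < n \<Longrightarrow> ancestor_depth (spiral_parent s) m \<le> ancestor_depth (spiral_parent s) m'"
proof (induction m' arbitrary: m rule: less_induct)
  case (less m')
  show ?case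
  proof (cases "m = 0")
    case False
    then have m: "1 \<le> m" "1 \<le> m'" using less.prems by auto
    have "spiral_parent s m \<le> spiral_parent s m'" using spiral_parent_mono less.prems by blast
    moreover have "spiral_parent s m' < m'" using spiral_parent_less m less.prems by blast
    ultimately show ?thesis
      using less.IH less.prems ancestor_depth_Suc m by fastforce
  qed simp
qed

end

lemma tree_degree_list_spiral_degrees:
  assumes tree_with_boundary: "tree_with_boundary V E"
  shows "tree_degree_list (spiral_degrees (degree_sequence V E)) (card V)"
proof -
  let ?s = "spiral_degrees (degree_sequence V E)"
  have tree: "tree V E" and graph: "graph V E" and finite: "finite V"
    using tree_with_boundary unfolding tree_with_boundary_def tree_def graph_def by blast+
  have "set ?s = set_mset (degree_sequence V E)"
    by (metis mset_spiral_degrees set_mset_mset)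
  then have set_eq: "set ?s = deg E ` V"
    using finite by (simp add: degree_sequence_def)
  have "length ?s = size (degree_sequence V E)"
    by (metis mset_spiral_degrees size_mset)
  then have length: "length ?s = card V"
    by (simp add: degree_sequence_def)
  have nth_in: "i < card V \<Longrightarrow> ?s ! i \<in> deg E ` V" for i
    using set_eq length nth_mem by metis
  have "sum_list ?s = sum_mset (degree_sequence V E)"
    by (metis mset_spiral_degrees sum_mset_sum_list)
  also have "\<dots> = (\<Sum>v\<in>V. deg E v)"
    unfolding degree_sequence_def by (simp add: sum_unfold_sum_mset)
  also have "\<dots> = 2 * (card V - 1)"
  proof -
    have "card E + 1 = card V" using tree unfolding tree_def by blast
    then show ?thesis using sum_deg_eq_twice_card_edges[OF graph] by simp
  qed
  finally have "(\<Sum>i<card V. ?s ! i) = 2 * (card V - 1)"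
    using length by (simp add: sum_list_sum_nth atLeast0LessThan)
  moreover have "\<exists>i<card V. ?s ! i = 1"
  proof -
    obtain v where "v \<in> V" "deg E v = 1"
      using tree_with_boundary unfolding tree_with_boundary_def boundary_def by blast
    then show ?thesis using set_eq length by (metis imageI in_set_conv_nth)
  qed
  moreover have "\<exists>i<card V. 2 \<le> ?s ! i"
  proof -
    obtain v where "v \<in> V" "2 \<le> deg E v"
      using tree_with_boundary unfolding tree_with_boundary_def interior_def by blast
    then show ?thesis using set_eq length by (metis imageI in_set_conv_nth)
  qed
  moreover have "1 \<le> ?s ! i" if "i < card V" for i
  proof -
    have "\<And>v. v \<in> V \<Longrightarrow> 1 \<le> deg E v"
      using tree_with_boundary unfolding tree_with_boundary_def boundary_def interior_def by force
    then show ?thesis using nth_in[OF that] by auto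
  qed
  ultimately show ?thesis
    using length sorted_spiral_degrees by unfold_locales auto
qed

section \<open>Uniqueness\<close>

definition rank :: "'a set \<Rightarrow> ('a \<Rightarrow> 'a \<Rightarrow> bool) \<Rightarrow> 'a \<Rightarrow> nat" where
  "rank V prec v = card {w \<in> V. prec w v}"

lemma
  assumes fin: "finite V" and order: "strict_total_order_on V prec"
  shows rank_less_iff: "u \<in> V \<Longrightarrow> v \<in> V \<Longrightarrow> rank V prec u < rank V prec v \<longleftrightarrow> prec u v"
    and bij_betw_rank: "bij_betw (rank V prec) V {0..<card V}"
proof -
  have irrefl: "\<And>x. x \<in> V \<Longrightarrow> \<not> prec x x"
    and trans: "\<And>x y z. x \<in> V \<Longrightarrow> y \<in> V \<Longrightarrow> z \<in> V \<Longrightarrow> prec x y \<Longrightarrow> prec y z \<Longrightarrow> prec x z"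
    and total: "\<And>x y. x \<in> V \<Longrightarrow> y \<in> V \<Longrightarrow> x \<noteq> y \<Longrightarrow> prec x y \<or> prec y x"
    using order unfolding strict_total_order_on_def by blast+
  have less: "rank V prec u < rank V prec v" if "u \<in> V" "v \<in> V" "prec u v" for u v
  proof -
    have "{w \<in> V. prec w u} \<subset> {w \<in> V. prec w v}" using that irrefl trans by blast
    then show ?thesis unfolding rank_def using fin by (intro psubset_card_mono) auto
  qed
  show "u \<in> V \<Longrightarrow> v \<in> V \<Longrightarrow> rank V prec u < rank V prec v \<longleftrightarrow> prec u v" for u v
    using less[of u v] less[of v u] total[of u v] by (cases "u = v") auto
  have inj: "inj_on (rank V prec) V"
    by (rule inj_onI) (use less total in fastforce)
  have "rank V prec ` V \<subseteq> {0..<card V}"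
  proof
    fix x assume "x \<in> rank V prec ` V"
    then obtain v where v: "v \<in> V" "x = rank V prec v" by blast
    have "{w \<in> V. prec w v} \<subseteq> V - {v}" using irrefl v by blast
    then have "rank V prec v \<le> card (V - {v})" unfolding rank_def using fin by (intro card_mono) auto
    also have "\<dots> < card V" using fin v by (meson card_Diff1_less)
    finally show "x \<in> {0..<card V}" using v by simp
  qed
  moreover have "card (rank V prec ` V) = card {0..<card V}" using card_image[OF inj] by simp
  ultimately have "rank V prec ` V = {0..<card V}" by (simp add: card_subset_eq)
  then show "bij_betw (rank V prec) V {0..<card V}" using inj unfolding bij_betw_def by blast
qed

locale SLO_star_ordered =
  fixes V :: "'a set" and E :: "'a set set" and root :: 'a and prec :: "'a \<Rightarrow> 'a \<Rightarrow> bool"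
  assumes tree_with_boundary: "tree_with_boundary V E" and SLO_star: "SLO_star V E root prec"
begin

sublocale rooted_tree V E root
  using tree_with_boundary SLO_star
  by unfold_locales (simp_all add: tree_with_boundary_def SLO_star_def SLO_def)

lemma strict_total_order: "strict_total_order_on V prec"
  using SLO_star unfolding SLO_star_def SLO_def by blast

lemma prec_height_le: "v \<in> V \<Longrightarrow> w \<in> V \<Longrightarrow> prec v w \<Longrightarrow> ht v \<le> ht w"
  using SLO_star unfolding SLO_star_def SLO_def by blast

lemma prec_children:
  "v1 \<in> V \<Longrightarrow> v2 \<in> V \<Longrightarrow> prec v1 v2 \<Longrightarrow> child E root v1 w1 \<Longrightarrow> child E root v2 w2 \<Longrightarrow> prec w1 w2"
  using SLO_star child_in_V unfolding SLO_star_def SLO_def by blast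

lemma prec_boundary: "v \<in> V \<Longrightarrow> w \<in> V \<Longrightarrow> prec v w \<Longrightarrow> v \<in> boundary V E \<Longrightarrow> w \<in> boundary V E"
  using SLO_star unfolding SLO_star_def SLO_def by blast

lemma prec_interior_deg_le:
  "v \<in> interior V E \<Longrightarrow> w \<in> interior V E \<Longrightarrow> prec v w \<Longrightarrow> deg E v \<le> deg E w"
  using SLO_star unfolding SLO_star_def by blast

lemma prec_degree_key_le:
  assumes vw: "v \<in> V" "w \<in> V" "prec v w"
  shows "degree_key (deg E v) \<le> degree_key (deg E w)"
proof -
  have classes: "u \<in> V \<Longrightarrow> deg E u = 1 \<or> 2 \<le> deg E u" for u
    using tree_with_boundary unfolding tree_with_boundary_def boundary_def interior_def by blast
  have "deg E v = 1 \<Longrightarrow> deg E w = 1"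
    using prec_boundary[OF vw] vw unfolding boundary_def by blast
  moreover have "2 \<le> deg E v \<Longrightarrow> 2 \<le> deg E w \<Longrightarrow> deg E v \<le> deg E w"
    using prec_interior_deg_le vw unfolding interior_def by blast
  ultimately show ?thesis
    using classes[OF vw(1)] classes[OF vw(2)] by (auto simp: degree_key_def less_eq_prod_def)
qed

abbreviation rk :: "'a \<Rightarrow> nat" where
  "rk \<equiv> rank V prec"

abbreviation degs :: "nat list" where
  "degs \<equiv> spiral_degrees (degree_sequence V E)"

definition vertex_at :: "nat \<Rightarrow> 'a" where
  "vertex_at = inv_into V rk"

lemma bij_betw_rk: "bij_betw rk V {0..<card V}"
  by (rule bij_betw_rank[OF finite_vertices strict_total_order])

lemma prec_iff_rank_less: "u \<in> V \<Longrightarrow> v \<in> V \<Longrightarrow> prec u v \<longleftrightarrow> rk u < rk v"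
  using rank_less_iff[OF finite_vertices strict_total_order] by blast

lemma rank_less_card: "v \<in> V \<Longrightarrow> rk v < card V"
  using bij_betw_rk bij_betwE by fastforce

lemma vertex_at_in_V: "i < card V \<Longrightarrow> vertex_at i \<in> V"
  unfolding vertex_at_def using bij_betw_inv_into[OF bij_betw_rk] bij_betwE by fastforce

lemma rank_vertex_at: "i < card V \<Longrightarrow> rk (vertex_at i) = i"
  unfolding vertex_at_def using bij_betw_inv_into_right[OF bij_betw_rk] by simp

lemma vertex_at_rank: "v \<in> V \<Longrightarrow> vertex_at (rk v) = v"
  unfolding vertex_at_def using bij_betw_imp_inj_on[OF bij_betw_rk] by simp

lemma rank_root: "rk root = 0"
proof -
  have "\<not> prec w root" if "w \<in> V" for w
  proof
    assume "prec w root"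
    then have "w = root"
      using prec_height_le[OF that root_in_V] height_eq_0_iff[OF that]
        height_eq_0_iff[OF root_in_V] by simp
    with \<open>prec w root\<close> show False
      using strict_total_order root_in_V unfolding strict_total_order_on_def by blast
  qed
  then have "{w \<in> V. prec w root} = {}" by blast
  then show ?thesis unfolding rank_def by (metis card.empty)
qed

lemma rank_eq_0_iff: "v \<in> V \<Longrightarrow> rk v = 0 \<longleftrightarrow> v = root"
  using rank_root vertex_at_rank root_in_V by metis

lemma spiral_degrees_eq_ranked_degrees: "degs = map (\<lambda>i. deg E (vertex_at i)) [0..<card V]"
proof (rule spiral_degrees_eqI)
  have "bij_betw vertex_at {0..<card V} V"
    unfolding vertex_at_def by (rule bij_betw_inv_into[OF bij_betw_rk])
  then have "mset_set V = image_mset vertex_at (mset_set {0..<card V})"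
    by (metis bij_betw_def image_mset_mset_set)
  then show "mset (map (\<lambda>i. deg E (vertex_at i)) [0..<card V]) = degree_sequence V E"
    unfolding degree_sequence_def by (simp add: multiset.map_comp o_def)
  show "sorted (map degree_key (map (\<lambda>i. deg E (vertex_at i)) [0..<card V]))"
    unfolding sorted_iff_nth_mono_less
    using prec_degree_key_le prec_iff_rank_less vertex_at_in_V rank_vertex_at by auto
qed

lemma length_degs: "length degs = card V"
  by (simp add: spiral_degrees_eq_ranked_degrees)

lemma deg_eq_spiral_degree: "v \<in> V \<Longrightarrow> deg E v = degs ! rk v"
  using spiral_degrees_eq_ranked_degrees rank_less_card vertex_at_rank by simp

lemma card_children_eq_child_count:
  assumes v: "v \<in> V"
  shows "card {w \<in> V - {root}. parent w = v} = child_count degs (rk v)"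
proof -
  have "degs ! rk v = card {w \<in> V - {root}. parent w = v} + (if v = root then 0 else 1)"
    using deg_eq_card_children[OF v] deg_eq_spiral_degree[OF v] by simp
  then show ?thesis
    using rank_eq_0_iff[OF v] rank_less_card[OF v] length_degs unfolding child_count_def by auto
qed

definition parent_rank :: "nat \<Rightarrow> nat" where
  "parent_rank m = rk (parent (vertex_at m))"

lemma child_parent_vertex_at:
  assumes "1 \<le> m" "m < card V"
  shows "child E root (parent (vertex_at m)) (vertex_at m)"
proof (rule child_parent)
  show "vertex_at m \<in> V" using assms vertex_at_in_V by simp
  then show "vertex_at m \<noteq> root" using assms rank_eq_0_iff rank_vertex_at by fastforce
qed

lemma parent_rank_mono:
  assumes m: "1 \<le> m" "m \<le> m'" "m' < card V"
  shows "parent_rank m \<le> parent_rank m'"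
proof (rule ccontr)
  have children: "child E root (parent (vertex_at m)) (vertex_at m)"
      "child E root (parent (vertex_at m')) (vertex_at m')"
    using child_parent_vertex_at m by auto
  assume "\<not> parent_rank m \<le> parent_rank m'"
  then have "prec (parent (vertex_at m')) (parent (vertex_at m))"
    using prec_iff_rank_less child_in_V[OF children(1)] child_in_V[OF children(2)]
    unfolding parent_rank_def by simp
  then have "prec (vertex_at m') (vertex_at m)"
    using prec_children children child_in_V by blast
  then have "m' < m" using prec_iff_rank_less vertex_at_in_V rank_vertex_at m by auto
  then show False using m by simp
qed

lemma card_parent_rank_fiber:
  "card {m \<in> {1..<card V}. parent_rank m = i} = child_count degs i"
proof (cases "i < card V")
  case True
  have "{m \<in> {1..<card V}. parent_rank m = i} = rk ` {w \<in> V - {root}. parent w = vertex_at i}"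
  proof (rule set_eqI, rule iffI)
    fix m assume "m \<in> {m \<in> {1..<card V}. parent_rank m = i}"
    then have m: "1 \<le> m" "m < card V" "rk (parent (vertex_at m)) = i"
      unfolding parent_rank_def by auto
    have c: "child E root (parent (vertex_at m)) (vertex_at m)"
      using child_parent_vertex_at m by blast
    then have "parent (vertex_at m) = vertex_at i"
      using child_in_V vertex_at_rank m(3) by metis
    then show "m \<in> rk ` {w \<in> V - {root}. parent w = vertex_at i}"
      using child_in_V[OF c] rank_vertex_at[OF m(2)] by (metis (mono_tags, lifting) DiffI
          image_eqI mem_Collect_eq singletonD)
  next
    fix m assume "m \<in> rk ` {w \<in> V - {root}. parent w = vertex_at i}"
    then obtain w where w: "w \<in> V" "w \<noteq> root" "parent w = vertex_at i" "m = rk w" by blast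
    then show "m \<in> {m \<in> {1..<card V}. parent_rank m = i}"
      using rank_eq_0_iff rank_less_card vertex_at_rank rank_vertex_at[OF True]
      unfolding parent_rank_def by force
  qed
  moreover have "inj_on rk {w \<in> V - {root}. parent w = vertex_at i}"
    using bij_betw_imp_inj_on[OF bij_betw_rk] by (rule inj_on_subset) blast
  ultimately show ?thesis
    using card_children_eq_child_count[OF vertex_at_in_V[OF True]] rank_vertex_at[OF True]
    by (simp add: card_image)
next
  case False
  have "parent_rank m < card V" if "1 \<le> m" "m < card V" for m
    using child_parent_vertex_at[OF that] child_in_V rank_less_card unfolding parent_rank_def by blast
  then have "{m \<in> {1..<card V}. parent_rank m = i} = {}" using False by fastforce
  then show ?thesis using False length_degs unfolding child_count_def by simp
qed

lemma parent_rank_eq_spiral_parent: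
  "1 \<le> m \<Longrightarrow> m < card V \<Longrightarrow> parent_rank m = spiral_parent degs m"
  by (rule monotone_fibers_eq_spiral_parent[OF parent_rank_mono card_parent_rank_fiber])

lemma child_iff_spiral_parent:
  assumes xy: "x \<in> V" "y \<in> V"
  shows "child E root x y \<longleftrightarrow> 1 \<le> rk y \<and> rk x = spiral_parent degs (rk y)"
proof
  assume "child E root x y"
  then have y: "y \<noteq> root" and x: "x = parent y" using child_imp_parent by auto
  have "1 \<le> rk y" using rank_eq_0_iff[OF xy(2)] y by simp
  moreover have "spiral_parent degs (rk y) = rk x"
    using parent_rank_eq_spiral_parent[OF \<open>1 \<le> rk y\<close> rank_less_card[OF xy(2)]]
      vertex_at_rank[OF xy(2)] x
    unfolding parent_rank_def by simp
  ultimately show "1 \<le> rk y \<and> rk x = spiral_parent degs (rk y)" by simp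
next
  assume r: "1 \<le> rk y \<and> rk x = spiral_parent degs (rk y)"
  then have "y \<noteq> root" using rank_root by auto
  then have c: "child E root (parent y) y" using child_parent xy by blast
  have "rk x = rk (parent y)"
    using r parent_rank_eq_spiral_parent[of "rk y"] rank_less_card[OF xy(2)] vertex_at_rank[OF xy(2)]
    unfolding parent_rank_def by simp
  then have "x = parent y" using vertex_at_rank child_in_V[OF c] xy by metis
  then show "child E root x y" using c by simp
qed

lemma edge_iff_spiral_adj: "x \<in> V \<Longrightarrow> y \<in> V \<Longrightarrow> {x, y} \<in> E \<longleftrightarrow> spiral_adj degs (rk x) (rk y)"
  using edge_iff_child child_iff_spiral_parent unfolding spiral_adj_def by blast

end

lemma SLO_star_tree_spiral_ranking:
  assumes "SLO_star_tree V E"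
  obtains r where "bij_betw r V {0..<card V}"
    and "\<And>x y. x \<in> V \<Longrightarrow> y \<in> V \<Longrightarrow>
      {x, y} \<in> E \<longleftrightarrow> spiral_adj (spiral_degrees (degree_sequence V E)) (r x) (r y)"
proof -
  obtain root prec where "SLO_star V E root prec"
    using assms unfolding SLO_star_tree_def by blast
  then interpret SLO_star_ordered V E root prec
    using assms by unfold_locales (simp add: SLO_star_tree_def)
  show thesis using that bij_betw_rk edge_iff_spiral_adj by blast
qed

lemma SLO_star_trees_iso:
  assumes "SLO_star_tree V1 E1" "SLO_star_tree V2 E2"
    and same_degrees: "degree_sequence V1 E1 = degree_sequence V2 E2"
  shows "graph_iso V1 E1 V2 E2"
proof -
  obtain r1 where r1: "bij_betw r1 V1 {0..<card V1}"
    and edges1: "\<And>x y. x \<in> V1 \<Longrightarrow> y \<in> V1 \<Longrightarrow>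
      {x, y} \<in> E1 \<longleftrightarrow> spiral_adj (spiral_degrees (degree_sequence V1 E1)) (r1 x) (r1 y)"
    using SLO_star_tree_spiral_ranking[OF assms(1)] by blast
  obtain r2 where r2: "bij_betw r2 V2 {0..<card V2}"
    and edges2: "\<And>x y. x \<in> V2 \<Longrightarrow> y \<in> V2 \<Longrightarrow>
      {x, y} \<in> E2 \<longleftrightarrow> spiral_adj (spiral_degrees (degree_sequence V2 E2)) (r2 x) (r2 y)"
    using SLO_star_tree_spiral_ranking[OF assms(2)] by blast
  have "card V1 = card V2"
    using arg_cong[OF same_degrees, of size] by (simp add: degree_sequence_def)
  then have r2_inv: "bij_betw (inv_into V2 r2) {0..<card V1} V2"
    using bij_betw_inv_into[OF r2] by simp
  define f where "f = inv_into V2 r2 \<circ> r1"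
  have "r2 (f x) = r1 x" if "x \<in> V1" for x
    unfolding f_def using bij_betw_inv_into_right[OF r2] bij_betwE[OF r1] that \<open>card V1 = card V2\<close>
    by auto
  moreover have "f x \<in> V2" if "x \<in> V1" for x
    unfolding f_def using bij_betwE[OF r1] bij_betwE[OF r2_inv] that by auto
  ultimately have "{x, y} \<in> E1 \<longleftrightarrow> {f x, f y} \<in> E2" if "x \<in> V1" "y \<in> V1" for x y
    using edges1 edges2 that same_degrees by simp
  moreover have "bij_betw f V1 V2"
    unfolding f_def using r1 r2_inv by (rule bij_betw_trans)
  ultimately show ?thesis unfolding graph_iso_def by blast
qed

section \<open>Existence\<close>

locale spiral_tree = tree_degree_list s n for s n +
  fixes V :: "'a set" and vertex :: "nat \<Rightarrow> 'a"
  assumes bij_vertex: "bij_betw vertex {0..<n} V"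
begin

definition index :: "'a \<Rightarrow> nat" where
  "index = inv_into {0..<n} vertex"

definition spiral_edges :: "'a set set" where
  "spiral_edges = (\<lambda>m. {vertex m, vertex (spiral_parent s m)}) ` {1..<n}"

lemma vertex_in_V: "i < n \<Longrightarrow> vertex i \<in> V"
  using bij_vertex bij_betwE by fastforce

lemma vertex_eq_iff: "i < n \<Longrightarrow> k < n \<Longrightarrow> vertex i = vertex k \<longleftrightarrow> i = k"
  using bij_betw_imp_inj_on[OF bij_vertex] unfolding inj_on_def by auto

lemma index_less: "v \<in> V \<Longrightarrow> index v < n"
  unfolding index_def using bij_betw_inv_into[OF bij_vertex] bij_betwE by fastforce

lemma vertex_index: "v \<in> V \<Longrightarrow> vertex (index v) = v"
  unfolding index_def using bij_betw_inv_into_right[OF bij_vertex] by simp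

lemma index_vertex: "i < n \<Longrightarrow> index (vertex i) = i"
  unfolding index_def using bij_betw_imp_inj_on[OF bij_vertex] by simp

lemma vertex_0_in_V: "vertex 0 \<in> V"
  using vertex_in_V length_pos by simp

lemma spiral_parent_less_length: "1 \<le> m \<Longrightarrow> m < n \<Longrightarrow> spiral_parent s m < n"
  using spiral_parent_less by fastforce

lemma inj_on_spiral_edge: "inj_on (\<lambda>m. {vertex m, vertex (spiral_parent s m)}) {1..<n}"
proof (rule inj_onI)
  fix m m' assume m: "m \<in> {1..<n}" "m' \<in> {1..<n}"
    and eq: "{vertex m, vertex (spiral_parent s m)} = {vertex m', vertex (spiral_parent s m')}"
  have less: "spiral_parent s m < m" "spiral_parent s m' < m'" using spiral_parent_less m by auto
  from eq have "m = m' \<or> (m = spiral_parent s m' \<and> spiral_parent s m = m')"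
    using vertex_eq_iff m less by (auto simp: doubleton_eq_iff)
  then show "m = m'" using less by auto
qed

lemma spiral_edge_iff:
  assumes ik: "i < n" "k < n"
  shows "{vertex i, vertex k} \<in> spiral_edges \<longleftrightarrow> spiral_adj s i k"
proof
  assume "{vertex i, vertex k} \<in> spiral_edges"
  then obtain m where m: "1 \<le> m" "m < n" "{vertex i, vertex k} = {vertex m, vertex (spiral_parent s m)}"
    unfolding spiral_edges_def by auto
  then have "(i = m \<and> k = spiral_parent s m) \<or> (i = spiral_parent s m \<and> k = m)"
    using vertex_eq_iff ik spiral_parent_less_length by (auto simp: doubleton_eq_iff)
  then show "spiral_adj s i k" unfolding spiral_adj_def using m by auto
next
  assume "spiral_adj s i k"
  then show "{vertex i, vertex k} \<in> spiral_edges"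
    unfolding spiral_adj_def spiral_edges_def using ik by (auto simp: insert_commute)
qed

lemma adj_spiral_edges_iff:
  "x \<in> V \<Longrightarrow> y \<in> V \<Longrightarrow> adj spiral_edges x y \<longleftrightarrow> spiral_adj s (index x) (index y)"
  unfolding adj_def using spiral_edge_iff index_less vertex_index by metis

lemma graph_spiral_edges: "graph V spiral_edges"
  unfolding graph_def
proof (intro conjI ballI)
  show "finite V" using bij_vertex bij_betw_finite by blast
  fix e assume "e \<in> spiral_edges"
  then obtain m where m: "1 \<le> m" "m < n" "e = {vertex m, vertex (spiral_parent s m)}"
    unfolding spiral_edges_def by auto
  then have "vertex m \<noteq> vertex (spiral_parent s m)"
    using spiral_parent_less vertex_eq_iff spiral_parent_less_length by fastforce
  then show "e \<subseteq> V" "card e = 2" using m vertex_in_V spiral_parent_less_length by auto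
qed

lemma connected_spiral_edges: "connected_graph V spiral_edges"
  unfolding connected_graph_def
proof (intro conjI ballI)
  have reach: "(adj spiral_edges)\<^sup>*\<^sup>* (vertex 0) (vertex i)" if "i < n" for i
    using that
  proof (induction i rule: less_induct)
    case (less i)
    show ?case
    proof (cases "i = 0")
      case False
      then have "(adj spiral_edges)\<^sup>*\<^sup>* (vertex 0) (vertex (spiral_parent s i))"
        using less spiral_parent_less by simp
      moreover have "adj spiral_edges (vertex (spiral_parent s i)) (vertex i)"
        using spiral_edge_iff[OF spiral_parent_less_length less.prems] less.prems False
        unfolding adj_def spiral_adj_def by simp
      ultimately show ?thesis by (rule rtranclp.rtrancl_into_rtrancl)
    qed simp
  qed
  show "V \<noteq> {}" using vertex_0_in_V by blast
  fix x y assume "x \<in> V" "y \<in> V"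
  then have "(adj spiral_edges)\<^sup>*\<^sup>* (vertex 0) x" "(adj spiral_edges)\<^sup>*\<^sup>* (vertex 0) y"
    using reach index_less vertex_index by metis+
  then show "(adj spiral_edges)\<^sup>*\<^sup>* x y"
    using sympD[OF symp_rtranclp[OF symp_adj]] rtranclp_trans by metis
qed

lemma tree_spiral_edges: "tree V spiral_edges"
proof -
  have "card spiral_edges = n - 1"
    unfolding spiral_edges_def card_image[OF inj_on_spiral_edge] by simp
  moreover have "card V = n" using bij_betw_same_card[OF bij_vertex] by simp
  ultimately show ?thesis
    unfolding tree_def using graph_spiral_edges connected_spiral_edges length_pos by simp
qed

lemma deg_vertex:
  assumes i: "i < n"
  shows "deg spiral_edges (vertex i) = s ! i"
proof -
  let ?S = "{m \<in> {1..<n}. m = i \<or> spiral_parent s m = i}"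
  have "{e \<in> spiral_edges. vertex i \<in> e} = (\<lambda>m. {vertex m, vertex (spiral_parent s m)}) ` ?S"
    unfolding spiral_edges_def using vertex_eq_iff i spiral_parent_less_length by auto
  moreover have "inj_on (\<lambda>m. {vertex m, vertex (spiral_parent s m)}) ?S"
    by (rule inj_on_subset[OF inj_on_spiral_edge]) blast
  ultimately have "deg spiral_edges (vertex i) = card ?S"
    unfolding deg_def by (simp add: card_image)
  also have "?S = {m \<in> {1..<n}. spiral_parent s m = i} \<union> (if 1 \<le> i then {i} else {})"
    using i by auto
  also have "card \<dots> = child_count s i + (if 1 \<le> i then 1 else 0)"
  proof (cases "1 \<le> i")
    case True
    then have "i \<notin> {m \<in> {1..<n}. spiral_parent s m = i}" using spiral_parent_less[OF True i] by auto
    then show ?thesis using True card_spiral_parent_fiber[of i] by simp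
  qed (use card_spiral_parent_fiber[of i] in simp)
  also have "\<dots> = s ! i"
    using degree_pos[OF i] i length_eq unfolding child_count_def by (cases i) auto
  finally show ?thesis .
qed

lemma deg_spiral_edges: "v \<in> V \<Longrightarrow> deg spiral_edges v = s ! index v"
  using deg_vertex[OF index_less] vertex_index by metis

lemma degree_sequence_spiral_edges: "degree_sequence V spiral_edges = mset s"
proof -
  have "mset_set V = image_mset vertex (mset_set {0..<n})"
    using bij_vertex by (metis bij_betw_def image_mset_mset_set)
  then have "degree_sequence V spiral_edges = image_mset (deg spiral_edges \<circ> vertex) (mset_set {0..<n})"
    unfolding degree_sequence_def by (simp add: multiset.map_comp)
  also have "\<dots> = image_mset (\<lambda>i. s ! i) (mset_set {0..<n})"
    by (rule image_mset_cong) (simp add: deg_vertex)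
  also have "\<dots> = mset s" using map_nth[of s] length_eq by (metis mset_map mset_upt)
  finally show ?thesis .
qed

lemma tree_with_boundary_spiral_edges: "tree_with_boundary V spiral_edges"
  unfolding tree_with_boundary_def
proof (intro conjI tree_spiral_edges)
  show "boundary V spiral_edges \<noteq> {}"
    using vertex_in_V deg_vertex first_leaf unfolding boundary_def by fastforce
  show "interior V spiral_edges \<noteq> {}"
    using vertex_0_in_V deg_vertex root_degree length_pos unfolding interior_def by fastforce
  show "V = boundary V spiral_edges \<union> interior V spiral_edges"
    using deg_spiral_edges degree_pos index_less unfolding boundary_def interior_def by fastforce
qed

lemma height_spiral_edges:
  assumes v: "v \<in> V"
  shows "height spiral_edges (vertex 0) v = ancestor_depth (spiral_parent s) (index v)"
proof (rule height_eqI[OF graph_spiral_edges vertex_0_in_V _ _ _ v])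
  show "ancestor_depth (spiral_parent s) (index (vertex 0)) = 0"
    using index_vertex length_pos by simp
next
  fix x y assume "adj spiral_edges x y"
  moreover have "x \<in> V" "y \<in> V" using graph_adj_in[OF graph_spiral_edges] calculation by auto
  ultimately show "ancestor_depth (spiral_parent s) (index y) \<le> ancestor_depth (spiral_parent s) (index x) + 1"
    using adj_spiral_edges_iff ancestor_depth_Suc index_less unfolding spiral_adj_def by fastforce
next
  fix w assume w: "w \<in> V" "w \<noteq> vertex 0"
  then have i: "1 \<le> index w" "index w < n" using vertex_index index_less by (metis less_one not_le)+
  let ?u = "vertex (spiral_parent s (index w))"
  have "adj spiral_edges ?u w"
    using spiral_edge_iff[OF spiral_parent_less_length[OF i] i(2)] vertex_index[OF w(1)] i
    unfolding adj_def spiral_adj_def by simp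
  moreover have "ancestor_depth (spiral_parent s) (index w) = ancestor_depth (spiral_parent s) (index ?u) + 1"
    using ancestor_depth_Suc[OF i] index_vertex[OF spiral_parent_less_length[OF i]] by simp
  ultimately show "\<exists>u. adj spiral_edges u w \<and>
      ancestor_depth (spiral_parent s) (index w) = ancestor_depth (spiral_parent s) (index u) + 1"
    by blast
qed

lemma child_spiral_edgesD:
  assumes c: "child spiral_edges (vertex 0) x y"
  shows "1 \<le> index y \<and> index x = spiral_parent s (index y)"
proof -
  have a: "adj spiral_edges x y"
    and h: "height spiral_edges (vertex 0) y = height spiral_edges (vertex 0) x + 1"
    using c unfolding child_def by auto
  have xy: "x \<in> V" "y \<in> V" using graph_adj_in[OF graph_spiral_edges a] by auto
  have "\<not> (1 \<le> index x \<and> index y = spiral_parent s (index x))"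
  proof
    assume "1 \<le> index x \<and> index y = spiral_parent s (index x)"
    then show False
      using h height_spiral_edges xy ancestor_depth_Suc index_less by simp
  qed
  then show ?thesis using a adj_spiral_edges_iff xy unfolding spiral_adj_def by blast
qed

lemma SLO_star_spiral_edges: "SLO_star V spiral_edges (vertex 0) (\<lambda>x y. index x < index y)"
  unfolding SLO_star_def SLO_def
proof (intro conjI ballI impI vertex_0_in_V)
  show "strict_total_order_on V (\<lambda>x y. index x < index y)"
    unfolding strict_total_order_on_def using vertex_index by (metis less_irrefl less_trans nat_neq_iff)
next
  fix v w assume "v \<in> V" "w \<in> V" "index v < index w"
  then show "height spiral_edges (vertex 0) v \<le> height spiral_edges (vertex 0) w"
    using height_spiral_edges ancestor_depth_mono index_less by simp
next
  fix v1 v2 w1 w2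
  assume "v1 \<in> V" "v2 \<in> V" "index v1 < index v2" "w1 \<in> V" "w2 \<in> V"
    and "child spiral_edges (vertex 0) v1 w1" "child spiral_edges (vertex 0) v2 w2"
  then have "index v1 = spiral_parent s (index w1)" "index v2 = spiral_parent s (index w2)"
    and "spiral_parent s (index w1) < spiral_parent s (index w2)"
    using child_spiral_edgesD by auto
  then show "index w1 < index w2"
    using spiral_parent_mono[of "index w2" "index w1"] index_less[OF \<open>w1 \<in> V\<close>] by linarith
next
  fix v w assume vw: "v \<in> V" "w \<in> V" "index v < index w" and "v \<in> boundary V spiral_edges"
  then have "s ! index v = 1" using deg_spiral_edges unfolding boundary_def by simp
  then have "first_leaf \<le> index v" using interior_before_first_leaf[of "index v"] by fastforce
  then show "w \<in> boundary V spiral_edges"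
    using vw leaf_from_first_leaf index_less deg_spiral_edges unfolding boundary_def by simp
next
  fix v w assume vw: "v \<in> interior V spiral_edges" "w \<in> interior V spiral_edges" "index v < index w"
  then have "degree_key (s ! index v) \<le> degree_key (s ! index w)"
    using degree_key_mono index_less unfolding interior_def by simp
  then show "deg spiral_edges v \<le> deg spiral_edges w"
    using vw deg_spiral_edges unfolding interior_def by (auto simp: degree_key_def less_eq_prod_def)
qed

end

lemma (in tree_degree_list) ex_SLO_star_tree:
  assumes "finite V" "card V = n"
  obtains E where "degree_sequence V E = mset s" "SLO_star_tree V E"
proof -
  obtain vertex where "bij_betw vertex {0..<n} V"
    using ex_bij_betw_nat_finite[OF assms(1)] assms(2) by blast
  then interpret spiral_tree s n V vertex by unfold_locales
  show thesis
    using that degree_sequence_spiral_edges tree_with_boundary_spiral_edges SLO_star_spiral_edges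
    unfolding SLO_star_tree_def by blast
qed

theorem lemma2:
  fixes V :: "'a set" and E :: "'a set set" and \<pi> :: "nat multiset"
  assumes "tree_with_boundary V E" and "degree_sequence V E = \<pi>"
  shows "(\<exists>(V1 :: 'a set) (E1 :: 'a set set).
            tree_with_boundary V1 E1 \<and> degree_sequence V1 E1 = \<pi> \<and> SLO_star_tree V1 E1)
       \<and> (\<forall>(V1 :: 'b set) (E1 :: 'b set set) (V2 :: 'c set) (E2 :: 'c set set).
            tree_with_boundary V1 E1 \<and> degree_sequence V1 E1 = \<pi> \<and> SLO_star_tree V1 E1 \<and>
            tree_with_boundary V2 E2 \<and> degree_sequence V2 E2 = \<pi> \<and> SLO_star_tree V2 E2
            \<longrightarrow> graph_iso V1 E1 V2 E2)"
proof (intro conjI allI impI)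
  interpret tree_degree_list "spiral_degrees \<pi>" "card V"
    using tree_degree_list_spiral_degrees[OF assms(1)] assms(2) by simp
  have "finite V"
    using assms(1) unfolding tree_with_boundary_def tree_def graph_def by blast
  then obtain E1 where "degree_sequence V E1 = \<pi>" "SLO_star_tree V E1"
    using ex_SLO_star_tree by (metis mset_spiral_degrees)
  then show "\<exists>(V1 :: 'a set) (E1 :: 'a set set).
      tree_with_boundary V1 E1 \<and> degree_sequence V1 E1 = \<pi> \<and> SLO_star_tree V1 E1"
    unfolding SLO_star_tree_def by blast
next
  fix V1 :: "'b set" and E1 :: "'b set set" and V2 :: "'c set" and E2 :: "'c set set"
  assume "tree_with_boundary V1 E1 \<and> degree_sequence V1 E1 = \<pi> \<and> SLO_star_tree V1 E1 \<and>
    tree_with_boundary V2 E2 \<and> degree_sequence V2 E2 = \<pi> \<and> SLO_star_tree V2 E2"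
  then show "graph_iso V1 E1 V2 E2" using SLO_star_trees_iso by metis
qed

end
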